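(* Let $L$ be a distributive lattice, $n\ge1$, $a_i,b_i\in L$ with $a_i<b_i$ for $i\in[n]$, $\widehat{\mathbf e}_I\in L^n$ ($I\subseteq[n]$) the tuple with $i$-th component $b_i$ if $i\in I$ and $a_i$ otherwise, $D=\{\widehat{\mathbf e}_I:I\subseteq[n]\}$, and $f\colon D\to L$. If there is a lattice polynomial function $p\colon L^n\to L$ with $p|_D=f$, then $f$ is monotone and satisfies $$f(\widehat{\mathbf e}_{I\cup\{k\}})\wedge a_k\le f(\widehat{\mathbf e}_I)\le f(\widehat{\mathbf e}_{I\setminus\{k\}})\vee b_k\quad\text{for all } I\subseteq[n],\ k\in[n].$$
   Context: A lattice polynomial function is a composition of $\wedge$, $\vee$, projections and constants from $L$. $f$ monotone means $I\subseteq J\Rightarrow f(\widehat{\mathbf e}_I)\le f(\widehat{\mathbf e}_J)$. *)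

theory Defs
  imports Main
begin

text \<open>Tuples in L^n are represented as functions nat \<Rightarrow> 'a, with only the
components indexed by [n] = {1..n} relevant.\<close>

inductive_set lattice_poly :: "nat \<Rightarrow> ((nat \<Rightarrow> 'a::distrib_lattice) \<Rightarrow> 'a) set"
  for n :: nat where
  proj: "i \<in> {1..n} \<Longrightarrow> (\<lambda>x. x i) \<in> lattice_poly n"
| const: "(\<lambda>x. c) \<in> lattice_poly n"
| inf: "p \<in> lattice_poly n \<Longrightarrow> q \<in> lattice_poly n \<Longrightarrow> (\<lambda>x. inf (p x) (q x)) \<in> lattice_poly n"
| sup: "p \<in> lattice_poly n \<Longrightarrow> q \<in> lattice_poly n \<Longrightarrow> (\<lambda>x. sup (p x) (q x)) \<in> lattice_poly n"

definition ehat :: "(nat \<Rightarrow> 'a) \<Rightarrow> (nat \<Rightarrow> 'a) \<Rightarrow> nat set \<Rightarrow> nat \<Rightarrow> 'a" where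
  "ehat a b I = (\<lambda>i. if i \<in> I then b i else a i)"

definition Dset :: "nat \<Rightarrow> (nat \<Rightarrow> 'a) \<Rightarrow> (nat \<Rightarrow> 'a) \<Rightarrow> (nat \<Rightarrow> 'a) set" where
  "Dset n a b = {ehat a b I | I. I \<subseteq> {1..n}}"

end

theory Submission
  imports Defs
begin

text \<open>A lattice polynomial function is monotone, and in a distributive lattice it moves
  by at most c when a single argument is moved within c: if x and y differ only in
  coordinate k, then \<open>c \<le> x k\<close> gives \<open>inf (p y) c \<le> p x\<close> and \<open>x k \<le> c\<close> gives
  \<open>p x \<le> sup (p y) c\<close>, both by induction on p using distributivity. The tuples for I,
  \<open>I \<union> {k}\<close> and \<open>I - {k}\<close> differ only at k, where they lie between \<open>a k\<close> and \<open>b k\<close>.\<close>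

lemma lattice_poly_mono:
  assumes "p \<in> lattice_poly n" and "\<forall>i\<in>{1..n}. x i \<le> y i"
  shows "p x \<le> p y"
  using assms
proof (induction p rule: lattice_poly.induct)
  case (proj i) then show ?case by blast
next
  case (const d) show ?case by simp
next
  case (inf p q) then show ?case by (intro inf_mono) blast+
next
  case (sup p q) then show ?case by (intro sup_mono) blast+
qed

lemma lattice_poly_inf_le:
  assumes "p \<in> lattice_poly n" and "\<forall>i\<in>{1..n}. i \<noteq> k \<longrightarrow> x i = y i" and "c \<le> x k"
  shows "inf (p y) c \<le> p x"
  using assms
proof (induction p rule: lattice_poly.induct)
  case (proj i) then show ?case by (cases "i = k") (auto intro: le_infI1 le_infI2)
next
  case (const d) show ?case by simp
next
  case (inf p q)
  have "inf (inf (p y) (q y)) c = inf (inf (p y) c) (inf (q y) c)"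
    by (simp add: inf.assoc inf.commute inf.left_commute)
  also have "\<dots> \<le> inf (p x) (q x)" using inf by (intro inf_mono) blast+
  finally show ?case .
next
  case (sup p q)
  have "inf (sup (p y) (q y)) c = sup (inf (p y) c) (inf (q y) c)" by (rule inf_sup_distrib2)
  also have "\<dots> \<le> sup (p x) (q x)" using sup by (intro sup_mono) blast+
  finally show ?case .
qed

lemma lattice_poly_le_sup:
  assumes "p \<in> lattice_poly n" and "\<forall>i\<in>{1..n}. i \<noteq> k \<longrightarrow> x i = y i" and "x k \<le> c"
  shows "p x \<le> sup (p y) c"
  using assms
proof (induction p rule: lattice_poly.induct)
  case (proj i) then show ?case by (cases "i = k") (auto intro: le_supI1 le_supI2)
next
  case (const d) show ?case by simp
next
  case (sup p q)
  have "sup (p x) (q x) \<le> sup (sup (p y) c) (sup (q y) c)" using sup by (intro sup_mono) blast+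
  also have "\<dots> = sup (sup (p y) (q y)) c" by (simp add: sup.assoc sup.commute sup.left_commute)
  finally show ?case .
next
  case (inf p q)
  have "inf (p x) (q x) \<le> inf (sup (p y) c) (sup (q y) c)" using inf by (intro inf_mono) blast+
  also have "\<dots> = sup (inf (p y) (q y)) c" by (rule sup_inf_distrib2[symmetric])
  finally show ?case .
qed

lemma ehat_in_Dset: "I \<subseteq> {1..n} \<Longrightarrow> ehat a b I \<in> Dset n a b"
  unfolding Dset_def by blast

lemma ehat_mono:
  fixes a b :: "nat \<Rightarrow> 'a::order"
  assumes "\<forall>i\<in>{1..n}. a i \<le> b i" and "I \<subseteq> J"
  shows "\<forall>i\<in>{1..n}. ehat a b I i \<le> ehat a b J i"
  using assms unfolding ehat_def by auto

lemma ehat_agree_off: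
  "\<forall>i\<in>A. i \<noteq> k \<longrightarrow> ehat a b I i = ehat a b (I \<union> {k}) i"
  "\<forall>i\<in>A. i \<noteq> k \<longrightarrow> ehat a b I i = ehat a b (I - {k}) i"
  unfolding ehat_def by auto

lemma ehat_between:
  fixes a b :: "nat \<Rightarrow> 'a::order"
  shows "a k \<le> b k \<Longrightarrow> a k \<le> ehat a b I k \<and> ehat a b I k \<le> b k"
  unfolding ehat_def by auto

theorem lemma3p2:
  fixes n :: nat and a b :: "nat \<Rightarrow> 'a::distrib_lattice"
    and f :: "(nat \<Rightarrow> 'a) \<Rightarrow> 'a"
  assumes "n \<ge> 1"
    and "\<And>i. i \<in> {1..n} \<Longrightarrow> a i < b i"
    and "\<exists>p \<in> lattice_poly n. \<forall>x \<in> Dset n a b. p x = f x"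
  shows "(\<forall>I J. I \<subseteq> J \<and> J \<subseteq> {1..n} \<longrightarrow> f (ehat a b I) \<le> f (ehat a b J))
    \<and> (\<forall>I k. I \<subseteq> {1..n} \<and> k \<in> {1..n} \<longrightarrow>
         inf (f (ehat a b (I \<union> {k}))) (a k) \<le> f (ehat a b I)
       \<and> f (ehat a b I) \<le> sup (f (ehat a b (I - {k}))) (b k))"
proof -
  obtain p where p: "p \<in> lattice_poly n" and pf: "\<forall>x \<in> Dset n a b. p x = f x"
    using assms(3) by blast
  have f_eq: "f (ehat a b I) = p (ehat a b I)" if "I \<subseteq> {1..n}" for I
    using pf ehat_in_Dset[OF that, of a b] by simp
  have ab: "\<forall>i\<in>{1..n}. a i \<le> b i" using assms(2) less_imp_le by blast
  have "f (ehat a b I) \<le> f (ehat a b J)" if "I \<subseteq> J" "J \<subseteq> {1..n}" for I J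
    using lattice_poly_mono[OF p ehat_mono[OF ab that(1)]] f_eq that by force
  moreover have "inf (f (ehat a b (I \<union> {k}))) (a k) \<le> f (ehat a b I)
      \<and> f (ehat a b I) \<le> sup (f (ehat a b (I - {k}))) (b k)"
    if "I \<subseteq> {1..n}" "k \<in> {1..n}" for I k
  proof
    have between: "a k \<le> ehat a b I k" "ehat a b I k \<le> b k"
      using ehat_between ab that(2) by blast+
    have "inf (p (ehat a b (I \<union> {k}))) (a k) \<le> p (ehat a b I)"
      by (rule lattice_poly_inf_le[where x = "ehat a b I", OF p _ between(1)]) (rule ehat_agree_off(1))
    then show "inf (f (ehat a b (I \<union> {k}))) (a k) \<le> f (ehat a b I)"
      using f_eq that by simp
    have "p (ehat a b I) \<le> sup (p (ehat a b (I - {k}))) (b k)"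
      by (rule lattice_poly_le_sup[where x = "ehat a b I", OF p _ between(2)]) (rule ehat_agree_off(2))
    then show "f (ehat a b I) \<le> sup (f (ehat a b (I - {k}))) (b k)"
      using f_eq[OF that(1)] f_eq[of "I - {k}"] that(1) by (simp add: subset_trans[OF Diff_subset])
  qed
  ultimately show ?thesis by blast
qed

end
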